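(* Let $p\geq 1$ and $q\geq 2$ be integers, and let $\Delta_{L_{p,q}}(x,t)$ be the two-variable Alexander polynomial of the link $L_{p,q}$, where $x$ corresponds to the axis $A$ and $t$ to $\hat B_{p,q}$. Then $\Delta_{L_{p,2}}(x,t)=1+xt^{2p-1}$, and for $q\geq3$, $$\Delta_{L_{p,q}}(x,t)=1+x^{q-1}t^{2p+q-3}+xt^2\left(\frac{1+t^{2p-3}}{1+t}\right)\left(\frac{1-(xt)^{q-2}}{1-xt}\right).$$
   Context: In the $q$-strand braid group with generators $\sigma_1,\dots,\sigma_{q-1}$ ($\sigma_i$ is the crossing of the $(i+1)$st strand over the $i$th), $B_{p,q}=\sigma_{q-1}\sigma_{q-2}\cdots\sigma_2\sigma_1^{2p-1}$; $\hat B_{p,q}$ is its closure, $A$ its braid axis, and $L_{p,q}=A\cup\hat B_{p,q}\subset S^3$. The Alexander polynomial is normalized via Morton's formula $\Delta_{L_{p,q}}(x,t)=\det\big(I-x\,C_{q-1}C_{q-2}\cdots C_2C_1^{2p-1}\big)$, where $C_i$ is the $(q-1)\times(q-1)$ matrix which equals the identity except in row $i$, whose entries in columns $i-1,i,i+1$ are $t,-t,1$ respectively (truncated to the two existing entries when $i=1$ or $i=q-1$). *)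

theory Defs
  imports Complex_Main "Jordan_Normal_Form.Determinant"
begin

text \<open>The (q-1) x (q-1) matrix C_i (rows/columns indexed 1..q-1 in the paper,
  0..q-2 here): identity except row i, whose entries in columns i-1, i, i+1
  are t, -t, 1 (entries outside the matrix are dropped).\<close>
definition C_mat :: "nat \<Rightarrow> complex \<Rightarrow> nat \<Rightarrow> complex mat" where
  "C_mat q t i = mat (q - 1) (q - 1) (\<lambda>(r, c).
     if r + 1 = i then
       (if c + 2 = i then t else if c + 1 = i then - t else if c = i then 1 else 0)
     else (if r = c then 1 else 0))"

definition braid_mat :: "nat \<Rightarrow> nat \<Rightarrow> complex \<Rightarrow> complex mat" where
  "braid_mat p q t = foldr (\<lambda>i M. C_mat q t i * M) (rev [2..<q]) (C_mat q t 1 ^\<^sub>m (2 * p - 1))"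

text \<open>Morton's formula for the two-variable Alexander polynomial of L_{p,q},
  evaluated at complex x, t.\<close>
definition alexander_L :: "nat \<Rightarrow> nat \<Rightarrow> complex \<Rightarrow> complex \<Rightarrow> complex" where
  "alexander_L p q x t = det (1\<^sub>m (q - 1) - x \<cdot>\<^sub>m braid_mat p q t)"

end

theory Submission
  imports Defs
begin

(* Write m = 2p - 1 and A_m = (sum k < m. (-t)^k).  Multiplying C_2, ..., C_{q-1} successively
   onto C_1^m shows that row r (counted from 0) of Morton's matrix B is
     (-t)^m t^r e_0 + t^r (A_m - [r >= 1]) e_1 + [r >= 1] e_{r+1}.
   Subtracting t times each row of I - xB from the next one does not change the determinant and
   leaves a tridiagonal matrix: first row (1 - x(-t)^m, -x A_m, 0, ...), then rows (-t, 1 + xt, -x).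
   Its leading principal minors satisfy D_{N+2} = (1 + xt) D_{N+1} - xt D_N, a recurrence with
   characteristic roots 1 and xt, so the determinant is a combination of geometric sums in xt. *)

lemma sum_lessThan_delta_mult:
  fixes u :: "'a :: semiring_0"
  shows "(\<Sum>l<(n::nat). (if l = a then u else 0) * f l) = (if a < n then u * f a else 0)"
proof -
  have "(\<Sum>l<n. (if l = a then u else 0) * f l) = (\<Sum>l<n. if l = a then u * f a else 0)"
    by (rule sum.cong) auto
  also have "\<dots> = (if a \<in> {..<n} then u * f a else 0)"
    by (rule sum.delta) simp
  finally show ?thesis by simp
qed

lemma pow_mat_Suc_left:
  assumes "A \<in> carrier_mat n n"
  shows "A ^\<^sub>m Suc k = A * A ^\<^sub>m k"
proof (induction k)
  case 0
  show ?case using assms by simp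
next
  case (Suc k)
  have "A ^\<^sub>m Suc (Suc k) = (A * A ^\<^sub>m k) * A"
    using Suc by simp
  also have "\<dots> = A * (A ^\<^sub>m k * A)"
    using assms by (simp add: assoc_mult_mat[of _ n n _ n _ n])
  finally show ?case by simp
qed

lemma dim_C_mat [simp]:
  "dim_row (C_mat q t i) = q - 1" "dim_col (C_mat q t i) = q - 1"
  unfolding C_mat_def by simp_all

lemma C_mat_carrier: "C_mat q t i \<in> carrier_mat (q - 1) (q - 1)"
  by (simp add: carrier_matI)

lemma index_C_mat_mult:
  assumes "M \<in> carrier_mat (q - 1) nc" and r: "r < q - 1" and "c < nc"
  shows "(C_mat q t i * M) $$ (r, c) =
    (if r + 1 = i then
       (if 2 \<le> i then t * M $$ (i - 2, c) else 0) - t * M $$ (i - 1, c)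
         + (if i < q - 1 then M $$ (i, c) else 0)
     else M $$ (r, c))"
proof -
  have "(C_mat q t i * M) $$ (r, c) = (\<Sum>l<q - 1. C_mat q t i $$ (r, l) * M $$ (l, c))"
    using assms by (simp add: C_mat_def scalar_prod_def atLeast0LessThan)
  also have "\<dots> = (\<Sum>l<q - 1.
      (if r + 1 = i then
         (if l = i - 2 then (if 2 \<le> i then t else 0) else 0) * M $$ (l, c)
         + (if l = i - 1 then - t else 0) * M $$ (l, c) + (if l = i then 1 else 0) * M $$ (l, c)
       else (if l = r then 1 else 0) * M $$ (l, c)))"
    using r by (intro sum.cong) (auto simp: C_mat_def)
  also have "\<dots> = (if r + 1 = i then
       (if 2 \<le> i then t * M $$ (i - 2, c) else 0) - t * M $$ (i - 1, c)
         + (if i < q - 1 then M $$ (i, c) else 0)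
     else M $$ (r, c))"
    using r by (auto simp: sum.distrib sum_lessThan_delta_mult)
  finally show ?thesis .
qed

lemma index_C_mat_1_pow:
  assumes "r < q - 1" and "c < q - 1"
  shows "(C_mat q t 1 ^\<^sub>m m) $$ (r, c) =
    (if r = 0 then (if c = 0 then (- t) ^ m else if c = 1 then (\<Sum>k<m. (- t) ^ k) else 0)
     else if r = c then 1 else 0)"
  using assms
proof (induction m arbitrary: r c)
  case 0
  then show ?case by simp
next
  case (Suc m)
  have "(C_mat q t 1 ^\<^sub>m Suc m) $$ (r, c) = (C_mat q t 1 * C_mat q t 1 ^\<^sub>m m) $$ (r, c)"
    by (simp only: pow_mat_Suc_left[OF C_mat_carrier])
  also have "\<dots> = (if r = 0 then - t * (C_mat q t 1 ^\<^sub>m m) $$ (0, c)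
      + (if 1 < q - 1 then (C_mat q t 1 ^\<^sub>m m) $$ (1, c) else 0)
      else (C_mat q t 1 ^\<^sub>m m) $$ (r, c))"
    by (subst index_C_mat_mult[OF pow_carrier_mat[OF C_mat_carrier] Suc.prems]) simp
  also have "\<dots> = (if r = 0 then (if c = 0 then (- t) ^ Suc m
      else if c = 1 then (\<Sum>k<Suc m. (- t) ^ k) else 0)
     else if r = c then 1 else 0)"
    using Suc by (auto simp del: sum.lessThan_Suc simp: sum.lessThan_Suc_shift sum_distrib_left sum_negf)
  finally show ?case .
qed

definition braid_prefix_mat :: "nat \<Rightarrow> complex \<Rightarrow> nat \<Rightarrow> nat \<Rightarrow> complex mat" where
  "braid_prefix_mat q t m j = foldr (\<lambda>i M. C_mat q t i * M) (rev [2..<j]) (C_mat q t 1 ^\<^sub>m m)"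

lemma braid_prefix_mat_Suc:
  "2 \<le> j \<Longrightarrow> braid_prefix_mat q t m (Suc j) = C_mat q t j * braid_prefix_mat q t m j"
  unfolding braid_prefix_mat_def by simp

lemma braid_prefix_mat_carrier: "braid_prefix_mat q t m j \<in> carrier_mat (q - 1) (q - 1)"
proof -
  have "foldr (\<lambda>i M. C_mat q t i * M) is (C_mat q t 1 ^\<^sub>m m) \<in> carrier_mat (q - 1) (q - 1)"
    for "is" unfolding carrier_mat_def by (induction "is") auto
  then show ?thesis unfolding braid_prefix_mat_def .
qed

definition braid_mat_entry :: "complex \<Rightarrow> nat \<Rightarrow> nat \<Rightarrow> nat \<Rightarrow> complex" where
  "braid_mat_entry t m r c =
     (if c = 0 then (- t) ^ m * t ^ r else 0)
   + (if c = 1 then t ^ r * ((\<Sum>k<m. (- t) ^ k) - (if 1 \<le> r then 1 else 0)) else 0)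
   + (if 1 \<le> r \<and> c = r + 1 then 1 else 0)"

lemma index_braid_prefix_mat:
  assumes "r < q - 1" and "c < q - 1"
  shows "braid_prefix_mat q t m (k + 2) $$ (r, c) =
    (if r \<le> k then braid_mat_entry t m r c else if r = c then 1 else 0)"
  using assms
proof (induction k arbitrary: r c)
  case 0
  then show ?case
    using index_C_mat_1_pow[OF 0] by (auto simp: braid_prefix_mat_def braid_mat_entry_def)
next
  case (Suc k)
  have "braid_prefix_mat q t m (Suc k + 2) $$ (r, c) = (C_mat q t (k + 2) * braid_prefix_mat q t m (k + 2)) $$ (r, c)"
    by (simp add: braid_prefix_mat_Suc)
  also have "\<dots> = (if r = k + 1 then
      t * braid_prefix_mat q t m (k + 2) $$ (k, c) - t * braid_prefix_mat q t m (k + 2) $$ (k + 1, c)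
        + (if k + 2 < q - 1 then braid_prefix_mat q t m (k + 2) $$ (k + 2, c) else 0)
      else braid_prefix_mat q t m (k + 2) $$ (r, c))"
    using Suc.prems by (simp add: index_C_mat_mult[OF braid_prefix_mat_carrier])
  also have "\<dots> = (if r \<le> Suc k then braid_mat_entry t m r c else if r = c then 1 else 0)"
    using Suc by (auto simp: braid_mat_entry_def right_diff_distrib)
  finally show ?case .
qed

lemma braid_mat_eq_prefix: "braid_mat p q t = braid_prefix_mat q t (2 * p - 1) q"
  unfolding braid_mat_def braid_prefix_mat_def ..

lemma braid_mat_carrier: "braid_mat p q t \<in> carrier_mat (q - 1) (q - 1)"
  unfolding braid_mat_eq_prefix by (rule braid_prefix_mat_carrier)

lemma dim_braid_mat [simp]:
  "dim_row (braid_mat p q t) = q - 1" "dim_col (braid_mat p q t) = q - 1"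
  using braid_mat_carrier[of p q t] by auto

lemma index_braid_mat:
  assumes "2 \<le> q" and "r < q - 1" and "c < q - 1"
  shows "braid_mat p q t $$ (r, c) = braid_mat_entry t (2 * p - 1) r c"
proof -
  have q: "q - 2 + 2 = q"
    using assms(1) by simp
  have "r \<le> q - 2"
    using assms(2) by linarith
  then show ?thesis
    using index_braid_prefix_mat[OF assms(2,3), of t "2 * p - 1" "q - 2"]
    unfolding q braid_mat_eq_prefix by simp
qed

definition elim_mat :: "nat \<Rightarrow> 'a :: comm_ring_1 \<Rightarrow> 'a mat" where
  "elim_mat n t = mat n n (\<lambda>(r, c). if r = c then 1 else if c + 1 = r then - t else 0)"

lemma elim_mat_carrier: "elim_mat n t \<in> carrier_mat n n"
  unfolding elim_mat_def by simp

lemma det_elim_mat: "det (elim_mat n t) = 1"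
proof -
  have "det (elim_mat n t) = prod_list (diag_mat (elim_mat n t))"
    by (rule det_lower_triangular[OF _ elim_mat_carrier]) (auto simp: elim_mat_def)
  also have "diag_mat (elim_mat n t) = map (\<lambda>i. 1) [0..<n]"
    by (auto simp: diag_mat_def elim_mat_def)
  finally show ?thesis by (simp add: map_replicate_const)
qed

lemma index_elim_mat_mult:
  assumes "A \<in> carrier_mat n nc" and r: "r < n" and "c < nc"
  shows "(elim_mat n t * A) $$ (r, c) = A $$ (r, c) - (if 1 \<le> r then t * A $$ (r - 1, c) else 0)"
proof -
  have "(elim_mat n t * A) $$ (r, c) = (\<Sum>l<n. elim_mat n t $$ (r, l) * A $$ (l, c))"
    using assms by (simp add: elim_mat_def scalar_prod_def atLeast0LessThan)
  also have "\<dots> = (\<Sum>l<n. (if l = r then 1 else 0) * A $$ (l, c)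
      + (if l = r - 1 then (if 1 \<le> r then - t else 0) else 0) * A $$ (l, c))"
    using r by (intro sum.cong) (auto simp: elim_mat_def)
  also have "\<dots> = A $$ (r, c) - (if 1 \<le> r then t * A $$ (r - 1, c) else 0)"
    using r by (auto simp: sum.distrib sum_lessThan_delta_mult)
  finally show ?thesis .
qed

definition tridiag_mat :: "'a :: comm_ring_1 \<Rightarrow> 'a \<Rightarrow> 'a \<Rightarrow> 'a \<Rightarrow> nat \<Rightarrow> 'a mat" where
  "tridiag_mat \<alpha> \<beta> x t N = mat N N (\<lambda>(i, j).
     if i = 0 then (if j = 0 then \<alpha> else if j = 1 then \<beta> else 0)
     else if j + 1 = i then - t else if j = i then 1 + x * t else if j = i + 1 then - x else 0)"

lemma tridiag_mat_carrier: "tridiag_mat \<alpha> \<beta> x t N \<in> carrier_mat N N"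
  unfolding tridiag_mat_def by simp

lemma mat_delete_tridiag_mat_last: "mat_delete (tridiag_mat \<alpha> \<beta> x t (Suc N)) N N = tridiag_mat \<alpha> \<beta> x t N"
  by (rule eq_matI) (auto simp: mat_delete_def tridiag_mat_def)

lemma det_tridiag_mat_1: "det (tridiag_mat \<alpha> \<beta> x t (Suc 0)) = \<alpha>"
  by (subst det_single) (auto simp: tridiag_mat_def)

lemma det_tridiag_mat_expand_last_row:
  "det (tridiag_mat \<alpha> \<beta> x t (N + 2)) = (1 + x * t) * det (tridiag_mat \<alpha> \<beta> x t (N + 1))
     + t * det (mat_delete (tridiag_mat \<alpha> \<beta> x t (N + 2)) (N + 1) N)"
proof -
  let ?T = "tridiag_mat \<alpha> \<beta> x t (N + 2)"
  have "det ?T = (\<Sum>j<N + 2. ?T $$ (N + 1, j) * cofactor ?T (N + 1) j)"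
    by (rule laplace_expansion_row[OF tridiag_mat_carrier]) simp
  also have "\<dots> = (\<Sum>j<N + 2. (if j = N then - t * cofactor ?T (N + 1) N else 0)
      + (if j = N + 1 then (1 + x * t) * cofactor ?T (N + 1) (N + 1) else 0))"
    by (intro sum.cong) (auto simp: tridiag_mat_def)
  also have "\<dots> = - t * cofactor ?T (N + 1) N + (1 + x * t) * cofactor ?T (N + 1) (N + 1)"
    by (simp add: sum.distrib)
  also have "cofactor ?T (N + 1) (N + 1) = det (tridiag_mat \<alpha> \<beta> x t (N + 1))"
    using mat_delete_tridiag_mat_last[of \<alpha> \<beta> x t "N + 1"]
    by (simp add: cofactor_def power_add[symmetric] mult_2[symmetric])
  also have "cofactor ?T (N + 1) N = - det (mat_delete ?T (N + 1) N)"
    by (simp add: cofactor_def)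
  finally show ?thesis by simp
qed

lemma det_tridiag_mat_2: "det (tridiag_mat \<alpha> \<beta> x t 2) = (1 + x * t) * \<alpha> + t * \<beta>"
proof -
  have "det (mat_delete (tridiag_mat \<alpha> \<beta> x t 2) 1 0) = \<beta>"
    by (subst det_single) (auto simp: mat_delete_def tridiag_mat_def)
  then show ?thesis
    using det_tridiag_mat_expand_last_row[of \<alpha> \<beta> x t 0]
    by (simp add: det_tridiag_mat_1 numeral_2_eq_2)
qed

lemma det_tridiag_mat_minor:
  "det (mat_delete (tridiag_mat \<alpha> \<beta> x t (N + 3)) (N + 2) (N + 1)) = - x * det (tridiag_mat \<alpha> \<beta> x t (N + 1))"
proof -
  let ?D = "mat_delete (tridiag_mat \<alpha> \<beta> x t (N + 3)) (N + 2) (N + 1)"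
  have D: "?D \<in> carrier_mat (N + 2) (N + 2)"
    using mat_delete_carrier[OF tridiag_mat_carrier, of \<alpha> \<beta> x t "N + 3" "N + 2" "N + 1"] by simp
  have "det ?D = (\<Sum>i<N + 2. ?D $$ (i, N + 1) * cofactor ?D i (N + 1))"
    by (rule laplace_expansion_column[OF D]) simp
  also have "\<dots> = (\<Sum>i<N + 2. if i = N + 1 then - x * cofactor ?D (N + 1) (N + 1) else 0)"
    by (intro sum.cong) (auto simp: tridiag_mat_def mat_delete_def)
  also have "\<dots> = - x * cofactor ?D (N + 1) (N + 1)"
    by simp
  also have "mat_delete ?D (N + 1) (N + 1) = tridiag_mat \<alpha> \<beta> x t (N + 1)"
    by (rule eq_matI) (auto simp: mat_delete_def tridiag_mat_def)
  then have "cofactor ?D (N + 1) (N + 1) = det (tridiag_mat \<alpha> \<beta> x t (N + 1))"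
    by (simp add: cofactor_def power_add[symmetric] mult_2[symmetric])
  finally show ?thesis .
qed

lemma det_tridiag_mat_recurrence:
  "det (tridiag_mat \<alpha> \<beta> x t (N + 3)) =
     (1 + x * t) * det (tridiag_mat \<alpha> \<beta> x t (N + 2)) - x * t * det (tridiag_mat \<alpha> \<beta> x t (N + 1))"
  using det_tridiag_mat_expand_last_row[of \<alpha> \<beta> x t "N + 1"] det_tridiag_mat_minor[of \<alpha> \<beta> x t N]
  by (simp add: numeral_3_eq_3 numeral_2_eq_2)

lemma det_tridiag_mat:
  "det (tridiag_mat \<alpha> \<beta> x t (Suc N)) = \<alpha> * (\<Sum>j<Suc N. (x * t) ^ j) + \<beta> * t * (\<Sum>j<N. (x * t) ^ j)"
proof (induction N rule: induct_nat_012)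
  case 0
  show ?case by (simp add: det_tridiag_mat_1)
next
  case 1
  show ?case
    using det_tridiag_mat_2[of \<alpha> \<beta> x t] by (simp add: numeral_2_eq_2 algebra_simps)
next
  case (ge2 n)
  have geom: "(\<Sum>j<k + 2. z ^ j) = (1 + z) * (\<Sum>j<k + 1. z ^ j) - z * (\<Sum>j<k. z ^ j)" for z :: 'a and k
    by (simp add: algebra_simps sum_distrib_left sum.distrib)
  show ?case
    using det_tridiag_mat_recurrence[of \<alpha> \<beta> x t n] ge2 geom[of "x * t" n] geom[of "x * t" "n + 1"]
    by (simp add: numeral_3_eq_3 numeral_2_eq_2 algebra_simps)
qed

lemma elim_mat_mult_alexander_mat:
  assumes "2 \<le> q"
  shows "elim_mat (q - 1) t * (1\<^sub>m (q - 1) - x \<cdot>\<^sub>m braid_mat p q t)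
    = tridiag_mat (1 - x * (- t) ^ (2 * p - 1)) (- x * (\<Sum>k<2 * p - 1. (- t) ^ k)) x t (q - 1)"
    (is "elim_mat _ t * ?A = ?T")
proof (rule eq_matI)
  have A: "?A \<in> carrier_mat (q - 1) (q - 1)"
    by (rule minus_carrier_mat[OF smult_carrier_mat[OF braid_mat_carrier]])
  have index_A: "?A $$ (i, j) = (if i = j then 1 else 0) - x * braid_mat_entry t (2 * p - 1) i j"
    if "i < q - 1" "j < q - 1" for i j
    using that index_braid_mat[OF assms that] by simp
  fix r c
  assume "r < dim_row ?T" "c < dim_col ?T"
  then have r: "r < q - 1" and c: "c < q - 1"
    by (simp_all add: tridiag_mat_def)
  show "(elim_mat (q - 1) t * ?A) $$ (r, c) = ?T $$ (r, c)"
  proof (cases "r = 0")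
    case True
    then show ?thesis
      unfolding index_elim_mat_mult[OF A r c] index_A[OF r c]
      using c by (auto simp: tridiag_mat_def braid_mat_entry_def)
  next
    case False
    have r': "r - 1 < q - 1"
      using r by simp
    from False obtain k where "r = Suc k"
      using not0_implies_Suc by blast
    then show ?thesis
      unfolding index_elim_mat_mult[OF A r c] index_A[OF r c] index_A[OF r' c]
      using r c False by (auto simp: tridiag_mat_def braid_mat_entry_def algebra_simps)
  qed
qed (simp_all add: elim_mat_def tridiag_mat_def)

lemma alexander_L_geometric:
  assumes "2 \<le> q"
  shows "alexander_L p q x t =
    (1 - x * (- t) ^ (2 * p - 1)) * (\<Sum>j<q - 1. (x * t) ^ j)
      - x * t * (\<Sum>k<2 * p - 1. (- t) ^ k) * (\<Sum>j<q - 2. (x * t) ^ j)"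
proof -
  let ?A = "1\<^sub>m (q - 1) - x \<cdot>\<^sub>m braid_mat p q t"
  have A: "?A \<in> carrier_mat (q - 1) (q - 1)"
    by (rule minus_carrier_mat[OF smult_carrier_mat[OF braid_mat_carrier]])
  have q: "q - 1 = Suc (q - 2)"
    using assms by simp
  have "alexander_L p q x t = det (elim_mat (q - 1) t) * det ?A"
    by (simp add: alexander_L_def det_elim_mat)
  also have "\<dots> = det (elim_mat (q - 1) t * ?A)"
    by (rule det_mult[OF elim_mat_carrier A, symmetric])
  also have "\<dots> = det (tridiag_mat (1 - x * (- t) ^ (2 * p - 1)) (- x * (\<Sum>k<2 * p - 1. (- t) ^ k)) x t (q - 1))"
    unfolding elim_mat_mult_alexander_mat[OF assms] ..
  finally show ?thesis
    unfolding det_tridiag_mat[of _ _ x t "q - 2", folded q] by (simp add: algebra_simps)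
qed

lemma alexander_L_closed_form:
  assumes "1 \<le> p" and "3 \<le> q" and "t \<noteq> -1" and "x * t \<noteq> 1"
  shows "alexander_L p q x t = 1 + x ^ (q - 1) * t ^ (2 * p + q - 3)
    + x * ((t ^ 2 + t ^ (2 * p - 1)) / (1 + t)) * ((1 - (x * t) ^ (q - 2)) / (1 - x * t))"
proof -
  define m where "m = 2 * p - 1"
  define n where "n = q - 2"
  have "- t \<noteq> 1" and "1 + t \<noteq> 0" and "1 - x * t \<noteq> 0"
    using assms(3,4) by (metis minus_minus, metis add_eq_0_iff, simp)
  have odd_power: "(- t) ^ m = - (t ^ m)"
    using assms(1) unfolding m_def by (simp add: power_minus_odd)
  have alt_sum: "(\<Sum>k<m. (- t) ^ k) = (1 + t ^ m) / (1 + t)"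
    using \<open>1 + t \<noteq> 0\<close> \<open>- t \<noteq> 1\<close> by (simp add: sum_gp_strict odd_power)
  have geom_sum: "(\<Sum>j<k. (x * t) ^ j) = (1 - (x * t) ^ k) / (1 - x * t)" for k
    using assms(4) by (simp add: sum_gp_strict)
  have exps: "q - 1 = Suc n" "q - 2 = n" "2 * p + q - 3 = m + n"
    using assms(1,2) unfolding m_def n_def by auto
  show ?thesis
    using alexander_L_geometric[of q p x t] assms(2) \<open>1 + t \<noteq> 0\<close> \<open>1 - x * t \<noteq> 0\<close>
    unfolding m_def[symmetric] exps alt_sum geom_sum odd_power
    by (simp add: divide_simps power_add power_mult_distrib) (simp add: algebra_simps power2_eq_square)
qed

theorem lemma3p1:
  fixes p q :: nat
  assumes "p \<ge> 1" and "q \<ge> 2"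
  shows "(q = 2 \<longrightarrow> (\<forall>x t. alexander_L p 2 x t = 1 + x * t ^ (2 * p - 1)))
       \<and> (q \<ge> 3 \<longrightarrow> (\<forall>x t. t \<noteq> 0 \<longrightarrow> t \<noteq> -1 \<longrightarrow> x * t \<noteq> 1 \<longrightarrow>
            alexander_L p q x t =
              1 + x ^ (q - 1) * t ^ (2 * p + q - 3)
                + x * t ^ 2 * ((1 + t powi (2 * int p - 3)) / (1 + t))
                    * ((1 - (x * t) ^ (q - 2)) / (1 - x * t))))"
proof (intro conjI impI allI)
  fix x t :: complex
  show "alexander_L p 2 x t = 1 + x * t ^ (2 * p - 1)"
    using alexander_L_geometric[of 2 p x t] assms(1) by (simp add: power_minus_odd)
next
  fix x t :: complex
  assume "q \<ge> 3" "t \<noteq> 0" "t \<noteq> -1" "x * t \<noteq> 1"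
  have "t ^ (2 * p - 1) = t powi (2 * int p - 3 + 2)"
    using assms(1) by (simp flip: power_int_of_nat)
  also have "\<dots> = t powi (2 * int p - 3) * t powi 2"
    by (rule power_int_add) (use \<open>t \<noteq> 0\<close> in simp)
  finally have "t ^ 2 + t ^ (2 * p - 1) = t ^ 2 * (1 + t powi (2 * int p - 3))"
    by (simp add: algebra_simps)
  then show "alexander_L p q x t = 1 + x ^ (q - 1) * t ^ (2 * p + q - 3)
      + x * t ^ 2 * ((1 + t powi (2 * int p - 3)) / (1 + t)) * ((1 - (x * t) ^ (q - 2)) / (1 - x * t))"
    using alexander_L_closed_form[OF assms(1) \<open>q \<ge> 3\<close> \<open>t \<noteq> -1\<close> \<open>x * t \<noteq> 1\<close>]
    by (simp add: mult.assoc times_divide_eq_right)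
qed

end
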